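(* Consider an implication of canonical form $(\ast)$ and an environment $\eta$. Suppose there is a subset $B\subseteq V$ such that (B1) $\sum_{c\in B}\Pi(i)(c)\le1$ for all $1\le i\le M$; (B2) for every $1\le j\le N$, either $\sum_{c\in V}\Omega(j)(c)=0$ or $\sum_{c\in B}\Omega(j)(c)=1$; (B3) for all $1\le i\le M$, $1\le j\le N$ with $\Pi(i)\not\ge\Omega(j)$ there is $c\in B$ with $\Pi(i)(c)<\Omega(j)(c)$. If the implication is unary $\eta$-valid, then the Parametricity Condition holds for it and $\eta$.
   Context: $\mathsf{Heap}$: finite partial functions $\mathsf{PosInt}\to\mathsf{Int}$; $g\sqsubseteq h$ means $h$ extends $g$; $h\cdot g$ union of disjoint heaps; componentwise on $\mathsf{Heap}^n$. $\mathsf{IRel}_n$: upward closed subsets of $\mathsf{Heap}^n$; $p*q=\{\mathbf f\cdot\mathbf g\mid\mathbf f\in p,\mathbf g\in q,\text{componentwise disjoint}\}$; $\Delta_n(X)=\{(h_1,\dots,h_n)\mid\exists f\in X.\ \forall k.\ f\sqsubseteq h_k\}$. Assertions: built from primitive assertions $P$, assertion variables, $\mathsf{true},\mathsf{false},\wedge,\vee,*$, quantifiers over integer variables. $n$-ary meaning under $\eta$ and $\rho:\mathsf{AVar}\to\mathsf{IRel}_n$: $[\![P]\!]^n=\Delta_n([\![P]\!]^{\mathrm{prim}}_\eta)$, $[\![a]\!]^n=\rho(a)$, connectives by $\mathsf{Heap}^n,\emptyset,\cap,\cup,*$, quantifiers by unions/intersections. $n$-ary $\eta$-validity of $\varphi\Rightarrow\psi$: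 $[\![\varphi]\!]^n_{\eta,\rho}\subseteq[\![\psi]\!]^n_{\eta,\rho}$ for all $\rho:\mathsf{AVar}\to\mathsf{IRel}_n$ (unary: $n=1$). Canonical form $(\ast)$: $\bigwedge_{i=1}^M\varphi_i*a_{i,1}*\cdots*a_{i,M_i}\Rightarrow\bigvee_{j=1}^N\psi_j*b_{j,1}*\cdots*b_{j,N_j}$, $M\ge1$, $N\ge0$, $\varphi_i,\psi_j$ free of assertion variables, every $b_{j,k}$ among the $a_{i,k}$. $V=\{a_{i,k}\}$; $\Pi(i)(c)=|\{k\mid a_{i,k}=c\}|$, $\Omega(j)(c)=|\{k\mid b_{j,k}=c\}|$; $\Pi(i)\ge\Omega(j)$ iff $\Pi(i)(c)\ge\Omega(j)(c)$ for all $c\in V$. Disjunct $j$ is empty if $N_j=0$. Parametricity Condition: for all $h,h_1,\dots,h_M\in\mathsf{Heap}$ with $h_i\sqsubseteq h$ and $h_i\in[\![\varphi_i]\!]^1_\eta$ for all $i$, either (1) there are $i,j$ with $h_i\in[\![\psi_j]\!]^1_\eta$ and $\Pi(i)\ge\Omega(j)$, or (2) there is an empty disjunct $j$ with $h\in[\![\psi_j]\!]^1_\eta$. *)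

theory Defs
  imports Main
begin

text \<open>Heaps: finite partial functions from positive integers to integers.
  Positive integers are represented by nat keys different from 0.\<close>

typedef heap = "{h :: nat \<rightharpoonup> int. finite (dom h) \<and> 0 \<notin> dom h}"
  by (rule exI[of _ Map.empty]) simp

definition heap_le :: "heap \<Rightarrow> heap \<Rightarrow> bool" (infix "\<sqsubseteq>" 50) where
  "g \<sqsubseteq> h \<longleftrightarrow> Rep_heap g \<subseteq>\<^sub>m Rep_heap h"

definition heap_disj :: "heap \<Rightarrow> heap \<Rightarrow> bool" where
  "heap_disj f g \<longleftrightarrow> dom (Rep_heap f) \<inter> dom (Rep_heap g) = {}"

definition heap_union :: "heap \<Rightarrow> heap \<Rightarrow> heap" where
  "heap_union f g = Abs_heap (Rep_heap f ++ Rep_heap g)"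

definition upclosed :: "heap set \<Rightarrow> bool" where
  "upclosed X \<longleftrightarrow> (\<forall>g h. g \<in> X \<longrightarrow> g \<sqsubseteq> h \<longrightarrow> h \<in> X)"

definition hstar :: "heap set \<Rightarrow> heap set \<Rightarrow> heap set" where
  "hstar p q = {heap_union f g | f g. f \<in> p \<and> g \<in> q \<and> heap_disj f g}"

definition Delta1 :: "heap set \<Rightarrow> heap set" where
  "Delta1 X = {h. \<exists>f\<in>X. f \<sqsubseteq> h}"

datatype ('p, 'v, 'x) assn =
    Prim 'p
  | AVar 'v
  | ATrue
  | AFalse
  | AConj "('p, 'v, 'x) assn" "('p, 'v, 'x) assn"
  | ADisj "('p, 'v, 'x) assn" "('p, 'v, 'x) assn"
  | AStar "('p, 'v, 'x) assn" "('p, 'v, 'x) assn"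
  | AEx 'x "('p, 'v, 'x) assn"
  | AAll 'x "('p, 'v, 'x) assn"

fun avars :: "('p, 'v, 'x) assn \<Rightarrow> 'v set" where
  "avars (Prim P) = {}"
| "avars (AVar a) = {a}"
| "avars ATrue = {}"
| "avars AFalse = {}"
| "avars (AConj p q) = avars p \<union> avars q"
| "avars (ADisj p q) = avars p \<union> avars q"
| "avars (AStar p q) = avars p \<union> avars q"
| "avars (AEx x p) = avars p"
| "avars (AAll x p) = avars p"

text \<open>Unary meaning. prim P eta is the primitive meaning [[P]]^prim_eta (arbitrary, given).\<close>
fun sem1 :: "('p \<Rightarrow> ('x \<Rightarrow> int) \<Rightarrow> heap set) \<Rightarrow> ('x \<Rightarrow> int) \<Rightarrow> ('v \<Rightarrow> heap set)
              \<Rightarrow> ('p, 'v, 'x) assn \<Rightarrow> heap set" where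
  "sem1 prim \<eta> \<rho> (Prim P) = Delta1 (prim P \<eta>)"
| "sem1 prim \<eta> \<rho> (AVar a) = \<rho> a"
| "sem1 prim \<eta> \<rho> ATrue = UNIV"
| "sem1 prim \<eta> \<rho> AFalse = {}"
| "sem1 prim \<eta> \<rho> (AConj p q) = sem1 prim \<eta> \<rho> p \<inter> sem1 prim \<eta> \<rho> q"
| "sem1 prim \<eta> \<rho> (ADisj p q) = sem1 prim \<eta> \<rho> p \<union> sem1 prim \<eta> \<rho> q"
| "sem1 prim \<eta> \<rho> (AStar p q) = hstar (sem1 prim \<eta> \<rho> p) (sem1 prim \<eta> \<rho> q)"
| "sem1 prim \<eta> \<rho> (AEx x p) = (\<Union>v. sem1 prim (\<eta>(x := v)) \<rho> p)"
| "sem1 prim \<eta> \<rho> (AAll x p) = (\<Inter>v. sem1 prim (\<eta>(x := v)) \<rho> p)"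

definition unary_valid :: "('p \<Rightarrow> ('x \<Rightarrow> int) \<Rightarrow> heap set) \<Rightarrow> ('x \<Rightarrow> int)
     \<Rightarrow> ('p, 'v, 'x) assn \<Rightarrow> ('p, 'v, 'x) assn \<Rightarrow> bool" where
  "unary_valid prim \<eta> \<phi> \<psi> \<longleftrightarrow>
     (\<forall>\<rho>. (\<forall>a. upclosed (\<rho> a)) \<longrightarrow> sem1 prim \<eta> \<rho> \<phi> \<subseteq> sem1 prim \<eta> \<rho> \<psi>)"

definition star_vars :: "('p, 'v, 'x) assn \<Rightarrow> 'v list \<Rightarrow> ('p, 'v, 'x) assn" where
  "star_vars \<phi> as = foldl (\<lambda>acc a. AStar acc (AVar a)) \<phi> as"

fun conj_list :: "('p, 'v, 'x) assn list \<Rightarrow> ('p, 'v, 'x) assn" where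
  "conj_list [] = ATrue"
| "conj_list [p] = p"
| "conj_list (p # ps) = AConj p (conj_list ps)"

fun disj_list :: "('p, 'v, 'x) assn list \<Rightarrow> ('p, 'v, 'x) assn" where
  "disj_list [] = AFalse"
| "disj_list (p # ps) = ADisj p (disj_list ps)"

text \<open>Left side: list L of pairs (phi_i, [a_i1,...,a_iMi]); right side: list R of pairs
  (psi_j, [b_j1,...,b_jNj]).  Indices are 0-based.\<close>
definition canon_lhs :: "(('p, 'v, 'x) assn \<times> 'v list) list \<Rightarrow> ('p, 'v, 'x) assn" where
  "canon_lhs L = conj_list (map (\<lambda>(\<phi>, as). star_vars \<phi> as) L)"

definition canon_rhs :: "(('p, 'v, 'x) assn \<times> 'v list) list \<Rightarrow> ('p, 'v, 'x) assn" where
  "canon_rhs R = disj_list (map (\<lambda>(\<psi>, bs). star_vars \<psi> bs) R)"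

definition canonical :: "(('p, 'v, 'x) assn \<times> 'v list) list \<Rightarrow> (('p, 'v, 'x) assn \<times> 'v list) list \<Rightarrow> bool" where
  "canonical L R \<longleftrightarrow> L \<noteq> [] \<and>
     (\<forall>i<length L. avars (fst (L ! i)) = {}) \<and>
     (\<forall>j<length R. avars (fst (R ! j)) = {}) \<and>
     (\<forall>j<length R. set (snd (R ! j)) \<subseteq> (\<Union>i<length L. set (snd (L ! i))))"

definition Vset :: "(('p, 'v, 'x) assn \<times> 'v list) list \<Rightarrow> 'v set" where
  "Vset L = (\<Union>i<length L. set (snd (L ! i)))"

definition Pi :: "(('p, 'v, 'x) assn \<times> 'v list) list \<Rightarrow> nat \<Rightarrow> 'v \<Rightarrow> nat" where
  "Pi L i c = count_list (snd (L ! i)) c"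

definition Omega :: "(('p, 'v, 'x) assn \<times> 'v list) list \<Rightarrow> nat \<Rightarrow> 'v \<Rightarrow> nat" where
  "Omega R j c = count_list (snd (R ! j)) c"

definition Pi_ge_Omega :: "(('p, 'v, 'x) assn \<times> 'v list) list \<Rightarrow> (('p, 'v, 'x) assn \<times> 'v list) list
     \<Rightarrow> nat \<Rightarrow> nat \<Rightarrow> bool" where
  "Pi_ge_Omega L R i j \<longleftrightarrow> (\<forall>c\<in>Vset L. Pi L i c \<ge> Omega R j c)"

text \<open>Parametricity condition.  The phi_i, psi_j are free of assertion variables, so their
  meaning does not depend on rho; we evaluate them under the (upward closed) rho = (\<lambda>_. {}).\<close>
definition parametricity_condition :: "('p \<Rightarrow> ('x \<Rightarrow> int) \<Rightarrow> heap set) \<Rightarrow> ('x \<Rightarrow> int)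
     \<Rightarrow> (('p, 'v, 'x) assn \<times> 'v list) list \<Rightarrow> (('p, 'v, 'x) assn \<times> 'v list) list \<Rightarrow> bool" where
  "parametricity_condition prim \<eta> L R \<longleftrightarrow>
     (\<forall>h hs. (\<forall>i<length L. hs i \<sqsubseteq> h \<and> hs i \<in> sem1 prim \<eta> (\<lambda>_. {}) (fst (L ! i))) \<longrightarrow>
        (\<exists>i<length L. \<exists>j<length R. hs i \<in> sem1 prim \<eta> (\<lambda>_. {}) (fst (R ! j)) \<and> Pi_ge_Omega L R i j)
      \<or> (\<exists>j<length R. snd (R ! j) = [] \<and> h \<in> sem1 prim \<eta> (\<lambda>_. {}) (fst (R ! j))))"

end

theory Submission
  imports Defs
begin

(* Fix h and heaps h_i \<sqsubseteq> h with h_i \<in> [[phi_i]].  We build one upward closed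
   valuation rho out of these data: a variable a \<in> B denotes the upward closure of the
   "complements" h - h_k of all conjuncts k in which a occurs, every other variable denotes
   all heaps.  By (B1) each conjunct mentions at most one B-variable, and only once, so h
   splits as h_i \<cdot> (h - h_i) and satisfies every conjunct phi_i * a_i1 * ... under rho.
   Validity then puts h into some disjunct psi_j * b_j1 * ....  By (B2) this disjunct is
   either empty (giving case (2) of the Parametricity Condition), or it contains exactly one
   B-variable c, exactly once.  In the latter case the psi_j-part of h is disjoint from some
   h - h_k with c occurring in conjunct k, hence lies below h_k, so h_k \<in> [[psi_j]]; and
   (B3) forces Pi(k) \<ge> Omega(j), which is case (1). *)

lemma heap_wf: "finite (dom (Rep_heap h)) \<and> 0 \<notin> dom (Rep_heap h)"
  using Rep_heap[of h] by simp

lemma heap_eqI: "Rep_heap f = Rep_heap g \<Longrightarrow> f = g"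
  by (simp add: Rep_heap_inject)

definition heap_minus :: "heap \<Rightarrow> heap \<Rightarrow> heap" where
  "heap_minus h g = Abs_heap (Rep_heap h |` (- dom (Rep_heap g)))"

definition heap_empty :: heap where
  "heap_empty = Abs_heap Map.empty"

lemma Rep_heap_minus: "Rep_heap (heap_minus h g) = Rep_heap h |` (- dom (Rep_heap g))"
  unfolding heap_minus_def
  by (rule Abs_heap_inverse) (use heap_wf[of h] in \<open>auto intro: finite_subset\<close>)

lemma Rep_heap_empty: "Rep_heap heap_empty = Map.empty"
  unfolding heap_empty_def by (rule Abs_heap_inverse) simp

lemma Rep_heap_union: "Rep_heap (heap_union f g) = Rep_heap f ++ Rep_heap g"
  unfolding heap_union_def
  by (rule Abs_heap_inverse) (use heap_wf[of f] heap_wf[of g] in auto)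

lemma heap_le_trans: "f \<sqsubseteq> g \<Longrightarrow> g \<sqsubseteq> h \<Longrightarrow> f \<sqsubseteq> h"
  unfolding heap_le_def by (rule map_le_trans)

lemma heap_le_union_left: "heap_disj f g \<Longrightarrow> f \<sqsubseteq> heap_union f g"
  unfolding heap_le_def heap_disj_def Rep_heap_union by (metis map_add_comm map_le_map_add)

lemma heap_le_union_right: "g \<sqsubseteq> heap_union f g"
  unfolding heap_le_def Rep_heap_union by simp

lemma heap_disj_commute: "heap_disj f g \<longleftrightarrow> heap_disj g f"
  unfolding heap_disj_def by blast

lemma heap_disj_mono: "heap_disj f g \<Longrightarrow> f' \<sqsubseteq> f \<Longrightarrow> heap_disj f' g"
  unfolding heap_disj_def heap_le_def using map_le_implies_dom_le by blast

lemma heap_union_empty: "heap_union g heap_empty = g" "heap_disj g heap_empty"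
  by (auto intro!: heap_eqI simp: Rep_heap_union Rep_heap_empty heap_disj_def)

lemma heap_split:
  assumes "g \<sqsubseteq> h"
  shows "h = heap_union g (heap_minus h g)" and "heap_disj g (heap_minus h g)"
proof -
  show "heap_disj g (heap_minus h g)" unfolding heap_disj_def Rep_heap_minus by auto
  show "h = heap_union g (heap_minus h g)"
  proof (intro heap_eqI ext)
    fix x
    show "Rep_heap h x = Rep_heap (heap_union g (heap_minus h g)) x"
      using assms unfolding Rep_heap_union Rep_heap_minus heap_le_def map_le_def
      by (cases "x \<in> dom (Rep_heap g)")
         (auto simp: map_add_def restrict_map_def split: option.splits)
  qed
qed

lemma heap_le_of_disj_minus:
  assumes "g \<sqsubseteq> h" "k \<sqsubseteq> h" "heap_disj g (heap_minus h k)"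
  shows "g \<sqsubseteq> k"
  unfolding heap_le_def map_le_def
proof
  fix x assume x: "x \<in> dom (Rep_heap g)"
  then have gx: "Rep_heap g x = Rep_heap h x"
    using assms(1) unfolding heap_le_def map_le_def by blast
  have "x \<notin> dom (Rep_heap (heap_minus h k))"
    using x assms(3) unfolding heap_disj_def by blast
  then have "x \<in> dom (Rep_heap k)"
    using x gx unfolding Rep_heap_minus by (auto simp: restrict_map_def split: if_splits)
  then show "Rep_heap g x = Rep_heap k x"
    using gx assms(2) unfolding heap_le_def map_le_def by metis
qed

text \<open>Separating conjunction preserves upward closure: an extension of \<open>f \<cdot> g\<close> is
  \<open>f \<cdot> g'\<close> with \<open>g'\<close> the complement of \<open>f\<close>, which extends \<open>g\<close>.\<close>
lemma upclosed_hstar: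
  assumes "upclosed p" "upclosed q"
  shows "upclosed (hstar p q)"
  unfolding upclosed_def
proof (intro allI impI)
  fix k h assume "k \<in> hstar p q" and kh: "k \<sqsubseteq> h"
  then obtain f g where fg: "k = heap_union f g" "f \<in> p" "g \<in> q" "heap_disj f g"
    unfolding hstar_def by auto
  have fh: "f \<sqsubseteq> h" using heap_le_union_left[OF fg(4)] kh fg(1) heap_le_trans by blast
  have gh: "g \<sqsubseteq> h" using heap_le_union_right kh fg(1) heap_le_trans by blast
  have "g \<sqsubseteq> heap_minus h f"
    unfolding heap_le_def map_le_def
  proof
    fix x assume x: "x \<in> dom (Rep_heap g)"
    then have "x \<notin> dom (Rep_heap f)" using fg(4) unfolding heap_disj_def by blast
    then show "Rep_heap g x = Rep_heap (heap_minus h f) x"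
      using x gh unfolding Rep_heap_minus heap_le_def map_le_def by simp
  qed
  then have "heap_minus h f \<in> q" using assms(2) fg(3) unfolding upclosed_def by blast
  then show "h \<in> hstar p q" unfolding hstar_def using heap_split[OF fh] fg(2) by blast
qed

lemma upclosed_sem1:
  "(\<forall>a. upclosed (\<rho> a)) \<Longrightarrow> upclosed (sem1 prim \<eta> \<rho> \<phi>)"
proof (induction \<phi> arbitrary: \<eta>)
  case (Prim P)
  then show ?case by (auto simp: upclosed_def Delta1_def intro: heap_le_trans)
next
  case (AStar \<phi>1 \<phi>2)
  then show ?case by (simp add: upclosed_hstar)
qed (simp_all add: upclosed_def, blast+)

lemma sem1_irrelevant:
  "(\<forall>a\<in>avars \<phi>. \<rho> a = \<rho>' a) \<Longrightarrow> sem1 prim \<eta> \<rho> \<phi> = sem1 prim \<eta> \<rho>' \<phi>"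
  by (induction \<phi> arbitrary: \<eta>) auto

lemma sem1_conj_list:
  "ps \<noteq> [] \<Longrightarrow> x \<in> sem1 prim \<eta> \<rho> (conj_list ps) \<longleftrightarrow> (\<forall>p\<in>set ps. x \<in> sem1 prim \<eta> \<rho> p)"
  by (induction ps rule: conj_list.induct) auto

lemma sem1_disj_list:
  "x \<in> sem1 prim \<eta> \<rho> (disj_list ps) \<longleftrightarrow> (\<exists>p\<in>set ps. x \<in> sem1 prim \<eta> \<rho> p)"
  by (induction ps) auto

lemma sem1_canon_lhsI:
  assumes "L \<noteq> []" "\<forall>i<length L. h \<in> sem1 prim \<eta> \<rho> (star_vars (fst (L ! i)) (snd (L ! i)))"
  shows "h \<in> sem1 prim \<eta> \<rho> (canon_lhs L)"
  using assms unfolding canon_lhs_def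
  by (subst sem1_conj_list) (auto simp: in_set_conv_nth, metis fst_conv snd_conv)

lemma sem1_canon_rhsE:
  assumes "h \<in> sem1 prim \<eta> \<rho> (canon_rhs R)"
  obtains j where "j < length R" "h \<in> sem1 prim \<eta> \<rho> (star_vars (fst (R ! j)) (snd (R ! j)))"
  using assms unfolding canon_rhs_def sem1_disj_list
  by (auto simp: in_set_conv_nth case_prod_beta)

lemma star_vars_snoc: "star_vars \<phi> (as @ [a]) = AStar (star_vars \<phi> as) (AVar a)"
  by (simp add: star_vars_def)

lemma star_vars_append: "star_vars \<phi> (xs @ ys) = star_vars (star_vars \<phi> xs) ys"
  by (simp add: star_vars_def)

lemma star_vars_Nil: "star_vars \<phi> [] = \<phi>"
  by (simp add: star_vars_def)

lemma star_vars_emptyI: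
  assumes "g \<in> sem1 prim \<eta> \<rho> \<phi>" "\<forall>a\<in>set as. heap_empty \<in> \<rho> a"
  shows "g \<in> sem1 prim \<eta> \<rho> (star_vars \<phi> as)"
  using assms(2)
proof (induction as rule: rev_induct)
  case Nil then show ?case using assms(1) by (simp add: star_vars_Nil)
next
  case (snoc a as)
  then show ?case using heap_union_empty[of g]
    unfolding star_vars_snoc by (simp add: hstar_def) metis
qed

lemma star_vars_singleI:
  assumes "g \<in> sem1 prim \<eta> \<rho> \<phi>" "r \<in> \<rho> c" "heap_disj g r"
    and "\<forall>a\<in>set xs \<union> set ys. heap_empty \<in> \<rho> a"
  shows "heap_union g r \<in> sem1 prim \<eta> \<rho> (star_vars \<phi> (xs @ c # ys))"
proof -
  have "g \<in> sem1 prim \<eta> \<rho> (star_vars \<phi> xs)" using star_vars_emptyI[OF assms(1)] assms(4) by auto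
  then have "heap_union g r \<in> sem1 prim \<eta> \<rho> (star_vars \<phi> (xs @ [c]))"
    unfolding star_vars_snoc using assms by (auto simp: hstar_def)
  then show ?thesis
    using star_vars_emptyI[of _ prim \<eta> \<rho> "star_vars \<phi> (xs @ [c])" ys] assms(4)
    by (simp add: star_vars_append[of _ "xs @ [c]" ys, simplified])
qed

lemma star_varsE:
  assumes "h \<in> sem1 prim \<eta> \<rho> (star_vars \<psi> bs)"
  obtains g where "g \<in> sem1 prim \<eta> \<rho> \<psi>" "g \<sqsubseteq> h"
    "\<forall>c\<in>set bs. \<exists>r\<in>\<rho> c. r \<sqsubseteq> h \<and> heap_disj g r"
  using assms
proof (induction bs arbitrary: h thesis rule: rev_induct)
  case Nil then show ?case by (simp add: star_vars_Nil heap_le_def)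
next
  case (snoc a bs)
  then obtain f r where fr: "h = heap_union f r" "f \<in> sem1 prim \<eta> \<rho> (star_vars \<psi> bs)"
    "r \<in> \<rho> a" "heap_disj f r"
    unfolding star_vars_snoc by (auto simp: hstar_def)
  obtain g where g: "g \<in> sem1 prim \<eta> \<rho> \<psi>" "g \<sqsubseteq> f"
    "\<forall>c\<in>set bs. \<exists>r\<in>\<rho> c. r \<sqsubseteq> f \<and> heap_disj g r"
    using snoc.IH[OF _ fr(2)] by blast
  have "f \<sqsubseteq> h" "r \<sqsubseteq> h" using fr heap_le_union_left heap_le_union_right by simp_all
  then show ?case
    using snoc.prems(1) g fr(3,4) heap_disj_mono heap_le_trans by fastforce
qed

lemma unique_marked_occurrence:
  assumes "finite B" "(\<Sum>a\<in>B. count_list xs a) \<le> 1" "c \<in> B" "c \<in> set xs"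
  obtains ys zs where "xs = ys @ c # zs" "\<forall>a\<in>set ys \<union> set zs. a \<notin> B"
proof -
  obtain ys zs where xs: "xs = ys @ c # zs" using split_list assms(4) by metis
  have "(\<Sum>a\<in>B. count_list xs a)
      = (\<Sum>a\<in>B. count_list ys a + count_list zs a + (if a = c then 1 else 0))"
    by (rule sum.cong) (auto simp: xs)
  also have "\<dots> = (\<Sum>a\<in>B. count_list ys a + count_list zs a) + 1"
    using assms(1,3) by (simp add: sum.distrib)
  finally have "(\<Sum>a\<in>B. count_list xs a) = (\<Sum>a\<in>B. count_list ys a + count_list zs a) + 1" .
  then have "\<forall>a\<in>B. count_list ys a + count_list zs a = 0"
    using assms(1,2) by simp
  then show thesis using that xs by (auto simp: count_list_0_iff)
qed

lemma sum_nat_eq_oneE: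
  fixes f :: "'a \<Rightarrow> nat"
  assumes "finite B" "(\<Sum>a\<in>B. f a) = 1"
  obtains c where "c \<in> B" "f c = 1" "\<forall>a\<in>B - {c}. f a = 0"
proof -
  obtain c where c: "c \<in> B" "f c \<noteq> 0" using assms(2) by (metis sum.neutral zero_neq_one)
  have "f c + (\<Sum>a\<in>B - {c}. f a) = 1" using sum.remove[OF assms(1) c(1), of f] assms(2) by simp
  then have "f c = 1" "(\<Sum>a\<in>B - {c}. f a) = 0" using c(2) by linarith+
  then show thesis using that c(1) assms(1) by simp
qed

lemma marked_dichotomy:
  assumes "finite V" "set xs \<subseteq> V" "finite B"
    and "(\<Sum>a\<in>V. count_list xs a) = 0 \<or> (\<Sum>a\<in>B. count_list xs a) = 1"
  obtains "xs = []"
  | c where "c \<in> B" "count_list xs c = 1" "\<forall>a\<in>B - {c}. count_list xs a = 0"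
proof -
  have "(\<Sum>a\<in>V. count_list xs a) = length xs" by (rule sum_count_set[OF assms(2,1)])
  then show thesis using assms(4) sum_nat_eq_oneE[OF assms(3)] that by (metis length_0_conv)
qed

definition witness_val :: "'v set \<Rightarrow> (('p, 'v, 'x) assn \<times> 'v list) list \<Rightarrow> heap \<Rightarrow> (nat \<Rightarrow> heap)
    \<Rightarrow> 'v \<Rightarrow> heap set" where
  "witness_val B L h hs a =
     (if a \<in> B then Delta1 {heap_minus h (hs k) | k. k < length L \<and> a \<in> set (snd (L ! k))}
      else UNIV)"

lemma upclosed_witness_val: "\<forall>a. upclosed (witness_val B L h hs a)"
  by (auto simp: witness_val_def upclosed_def Delta1_def intro: heap_le_trans)

lemma witness_conjunct:
  assumes "finite B" "(\<Sum>a\<in>B. count_list (snd (L ! i)) a) \<le> 1" "i < length L"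
    and "hs i \<sqsubseteq> h" "hs i \<in> sem1 prim \<eta> (witness_val B L h hs) (fst (L ! i))"
  shows "h \<in> sem1 prim \<eta> (witness_val B L h hs) (star_vars (fst (L ! i)) (snd (L ! i)))"
proof (cases "\<exists>c\<in>B. c \<in> set (snd (L ! i))")
  case True
  then obtain c where c: "c \<in> B" "c \<in> set (snd (L ! i))" by blast
  then obtain ys zs where split: "snd (L ! i) = ys @ c # zs" "\<forall>a\<in>set ys \<union> set zs. a \<notin> B"
    using unique_marked_occurrence[OF assms(1,2)] by metis
  have "heap_minus h (hs i) \<in> witness_val B L h hs c"
    using c assms(3) by (auto simp: witness_val_def Delta1_def heap_le_def)
  moreover have "\<forall>a\<in>set ys \<union> set zs. heap_empty \<in> witness_val B L h hs a"
    using split(2) by (simp add: witness_val_def)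
  ultimately show ?thesis
    using star_vars_singleI[OF assms(5) _ heap_split(2)[OF assms(4)]] heap_split(1)[OF assms(4)]
    by (simp add: split(1))
next
  case False
  have "h \<in> sem1 prim \<eta> (witness_val B L h hs) (fst (L ! i))"
    using upclosed_sem1[OF upclosed_witness_val] assms(4,5) unfolding upclosed_def by blast
  then show ?thesis using False by (intro star_vars_emptyI) (auto simp: witness_val_def)
qed

lemma witness_lhs:
  assumes "finite B" "L \<noteq> []" "\<forall>i<length L. (\<Sum>a\<in>B. count_list (snd (L ! i)) a) \<le> 1"
    and "\<forall>i<length L. hs i \<sqsubseteq> h \<and> hs i \<in> sem1 prim \<eta> (witness_val B L h hs) (fst (L ! i))"
  shows "h \<in> sem1 prim \<eta> (witness_val B L h hs) (canon_lhs L)"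
proof (intro sem1_canon_lhsI[OF assms(2)] allI impI)
  fix i assume "i < length L"
  then show "h \<in> sem1 prim \<eta> (witness_val B L h hs) (star_vars (fst (L ! i)) (snd (L ! i)))"
    using assms(3,4) by (intro witness_conjunct[OF assms(1)]) auto
qed

lemma witness_disjunct:
  assumes "h \<in> sem1 prim \<eta> (witness_val B L h hs) (star_vars \<psi> bs)" "c \<in> B" "c \<in> set bs"
    and "\<forall>k<length L. hs k \<sqsubseteq> h"
  obtains k where "k < length L" "c \<in> set (snd (L ! k))"
    "hs k \<in> sem1 prim \<eta> (witness_val B L h hs) \<psi>"
proof -
  let ?\<rho> = "witness_val B L h hs"
  obtain g where g: "g \<in> sem1 prim \<eta> ?\<rho> \<psi>" "g \<sqsubseteq> h"
    and parts: "\<forall>c\<in>set bs. \<exists>r\<in>?\<rho> c. r \<sqsubseteq> h \<and> heap_disj g r"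
    by (rule star_varsE[OF assms(1)])
  then obtain r where r: "r \<in> ?\<rho> c" "heap_disj r g" using assms(3) heap_disj_commute by blast
  then obtain k where k: "k < length L" "c \<in> set (snd (L ! k))" "heap_minus h (hs k) \<sqsubseteq> r"
    using assms(2) unfolding witness_val_def Delta1_def by auto
  have "heap_disj g (heap_minus h (hs k))"
    using heap_disj_mono[OF r(2) k(3)] heap_disj_commute by blast
  then have "g \<sqsubseteq> hs k" using heap_le_of_disj_minus g(2) assms(4) k(1) by blast
  then have "hs k \<in> sem1 prim \<eta> ?\<rho> \<psi>"
    using g(1) upclosed_sem1[OF upclosed_witness_val, of prim \<eta> B L h hs \<psi>]
    unfolding upclosed_def by blast
  with that k show thesis by blast
qed

lemma Pi_ge_Omega_single:
  assumes "\<not> Pi_ge_Omega L R k j \<longrightarrow> (\<exists>c\<in>B. Pi L k c < Omega R j c)"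
    and "c \<in> B" "Omega R j c = 1" "\<forall>a\<in>B - {c}. Omega R j a = 0" "c \<in> set (snd (L ! k))"
  shows "Pi_ge_Omega L R k j"
proof (rule ccontr)
  assume "\<not> Pi_ge_Omega L R k j"
  then obtain c' where "c' \<in> B" "Pi L k c' < Omega R j c'" using assms(1) by blast
  moreover have "1 \<le> Pi L k c" using assms(5) count_list_0_iff unfolding Pi_def by (metis less_one not_le)
  ultimately show False using assms(2-4) by (cases "c' = c") auto
qed

theorem mainTheorem6:
  fixes prim :: "'p \<Rightarrow> ('x \<Rightarrow> int) \<Rightarrow> heap set"
    and \<eta> :: "'x \<Rightarrow> int"
    and L R :: "(('p, 'v, 'x) assn \<times> 'v list) list"
    and B :: "'v set"
  assumes canon: "canonical L R"
    and BV: "B \<subseteq> Vset L"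
    and B1: "\<forall>i<length L. (\<Sum>c\<in>B. Pi L i c) \<le> 1"
    and B2: "\<forall>j<length R. (\<Sum>c\<in>Vset L. Omega R j c) = 0 \<or> (\<Sum>c\<in>B. Omega R j c) = 1"
    and B3: "\<forall>i<length L. \<forall>j<length R. \<not> Pi_ge_Omega L R i j \<longrightarrow> (\<exists>c\<in>B. Pi L i c < Omega R j c)"
    and valid: "unary_valid prim \<eta> (canon_lhs L) (canon_rhs R)"
  shows "parametricity_condition prim \<eta> L R"
  unfolding parametricity_condition_def
proof (intro allI impI)
  fix h hs assume H: "\<forall>i<length L. hs i \<sqsubseteq> h \<and> hs i \<in> sem1 prim \<eta> (\<lambda>_. {}) (fst (L ! i))"
  let ?\<rho> = "witness_val B L h hs"
  have finB: "finite B" using BV finite_subset unfolding Vset_def by auto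
  have closed: "sem1 prim \<eta> ?\<rho> \<phi> = sem1 prim \<eta> (\<lambda>_. {}) \<phi>" if "avars \<phi> = {}" for \<phi>
    using that by (intro sem1_irrelevant) simp
  have "\<forall>i<length L. hs i \<sqsubseteq> h \<and> hs i \<in> sem1 prim \<eta> ?\<rho> (fst (L ! i))"
    using H canon closed unfolding canonical_def by auto
  then have "h \<in> sem1 prim \<eta> ?\<rho> (canon_lhs L)"
    using witness_lhs[OF finB _ B1[unfolded Pi_def]] canon unfolding canonical_def by blast
  then have "h \<in> sem1 prim \<eta> ?\<rho> (canon_rhs R)"
    using valid[unfolded unary_valid_def, rule_format, of ?\<rho>] upclosed_witness_val[of B L h hs] by blast
  then obtain j where j: "j < length R" "h \<in> sem1 prim \<eta> ?\<rho> (star_vars (fst (R ! j)) (snd (R ! j)))"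
    by (rule sem1_canon_rhsE)
  have closed_j: "sem1 prim \<eta> ?\<rho> (fst (R ! j)) = sem1 prim \<eta> (\<lambda>_. {}) (fst (R ! j))"
    using canon j(1) closed unfolding canonical_def by simp
  have "finite (Vset L)" "set (snd (R ! j)) \<subseteq> Vset L"
    using canon j(1) unfolding canonical_def Vset_def by auto
  then show "(\<exists>i<length L. \<exists>j<length R. hs i \<in> sem1 prim \<eta> (\<lambda>_. {}) (fst (R ! j)) \<and> Pi_ge_Omega L R i j)
      \<or> (\<exists>j<length R. snd (R ! j) = [] \<and> h \<in> sem1 prim \<eta> (\<lambda>_. {}) (fst (R ! j)))"
  proof (rule marked_dichotomy[OF _ _ finB])
    show "(\<Sum>a\<in>Vset L. count_list (snd (R ! j)) a) = 0 \<or> (\<Sum>a\<in>B. count_list (snd (R ! j)) a) = 1"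
      using B2 j(1) unfolding Omega_def by blast
  next
    assume "snd (R ! j) = []"
    then show ?thesis using j closed_j by (auto simp: star_vars_Nil)
  next
    fix c assume c: "c \<in> B" "count_list (snd (R ! j)) c = 1" "\<forall>a\<in>B - {c}. count_list (snd (R ! j)) a = 0"
    then have "c \<in> set (snd (R ! j))" by (metis count_list_0_iff zero_neq_one)
    then obtain k where k: "k < length L" "c \<in> set (snd (L ! k))" "hs k \<in> sem1 prim \<eta> ?\<rho> (fst (R ! j))"
      using witness_disjunct[OF j(2) c(1)] H by blast
    have "Pi_ge_Omega L R k j"
      using Pi_ge_Omega_single[OF _ c(1) _ _ k(2)] B3 k(1) j(1) c unfolding Omega_def by blast
    then show ?thesis using k j(1) closed_j by blast
  qed
qed

end
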